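(* Let $\gamma_1,\dots,\gamma_r>0$ with $\gamma_{\min}=\min_i\gamma_i\ge\sqrt2$. Let $P$ be the solution of $A_\gamma^\top P+PA_\gamma=-I$ and $\Gamma=-A_\gamma^{-1}B=[(\gamma_1\cdots\gamma_r)^{-1},(\gamma_2\cdots\gamma_r)^{-1},\dots,\gamma_r^{-1}]^\top$. Then $\|P\Gamma\|\le\frac{C'}{\gamma_{\min}^2}$ for some constant $C'$ that does not depend on the $\gamma_i$'s.
   Context: $A_\gamma$ is the $r\times r$ matrix with diagonal entries $-\gamma_1,\dots,-\gamma_r$, entries $1$ on the superdiagonal and zeros elsewhere; $B=[0,\dots,0,1]^\top$. The indices are ordered so that $\gamma_r=\gamma_{\min}$. Norms are 2-norms. *)

theory Defs
  imports "Jordan_Normal_Form.Matrix"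
begin

text \<open>Indices are 0-based: the paper's gamma_1..gamma_r are gamma 0 .. gamma (r-1).\<close>

definition A_gamma :: "nat \<Rightarrow> (nat \<Rightarrow> real) \<Rightarrow> real mat" where
  "A_gamma r \<gamma> = mat r r (\<lambda>(i,j). if i = j then - \<gamma> i else if j = i + 1 then 1 else 0)"

definition B_vec :: "nat \<Rightarrow> real vec" where
  "B_vec r = vec r (\<lambda>i. if i = r - 1 then 1 else 0)"

text \<open>Gamma = -A^{-1} B, given explicitly: entry i is 1 / (gamma_i * ... * gamma_{r-1}).\<close>
definition Gamma_vec :: "nat \<Rightarrow> (nat \<Rightarrow> real) \<Rightarrow> real vec" where
  "Gamma_vec r \<gamma> = vec r (\<lambda>i. 1 / (\<Prod>j\<in>{i..<r}. \<gamma> j))"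

definition vnorm2 :: "real vec \<Rightarrow> real" where
  "vnorm2 v = sqrt (\<Sum>i<dim_vec v. (v $ i)^2)"

end

theory Submission imports Defs begin

text \<open>Written entrywise, the Lyapunov equation reads
  (gamma_i + gamma_j) P_ij = delta_ij + P_(i-1)j + P_i(j-1),
  so induction on i + j gives |P_ij| <= 3^(i+j) / gamma_min as soon as gamma_min >= 1.
  Every entry of Gamma is at most 1 / gamma_min, hence every entry of P Gamma is at most
  r 9^r / gamma_min^2, and C' = r^(3/2) 9^r works.\<close>

lemma sum_bidiagonal_column:
  fixes c f :: "nat \<Rightarrow> real"
  assumes "i < r"
  shows "(\<Sum>k\<in>{0..<r}. (if k = i then c k else if i = k + 1 then 1 else 0) * f k)
       = c i * f i + (if 0 < i then f (i - 1) else 0)"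
proof -
  have "(\<Sum>k\<in>{0..<r}. (if k = i then c k else if i = k + 1 then 1 else 0) * f k)
      = (\<Sum>k\<in>{0..<r}. (if k = i then c k * f k else 0) + (if k = i - 1 \<and> 0 < i then f k else 0))"
    by (rule sum.cong) auto
  also have "\<dots> = c i * f i + (if 0 < i then f (i - 1) else 0)"
    using assms by (simp add: sum.distrib sum.delta)
  finally show ?thesis .
qed

lemma A_gamma_carrier: "A_gamma r \<gamma> \<in> carrier_mat r r"
  unfolding A_gamma_def by simp

lemma A_gamma_index:
  "i < r \<Longrightarrow> j < r \<Longrightarrow>
   A_gamma r \<gamma> $$ (i, j) = (if i = j then - \<gamma> i else if j = i + 1 then 1 else 0)"
  unfolding A_gamma_def by simp

lemma transpose_A_gamma_mult_index:
  assumes "P \<in> carrier_mat r r" "i < r" "j < r"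
  shows "(transpose_mat (A_gamma r \<gamma>) * P) $$ (i, j)
       = - \<gamma> i * P $$ (i, j) + (if 0 < i then P $$ (i - 1, j) else 0)"
proof -
  have "(transpose_mat (A_gamma r \<gamma>) * P) $$ (i, j)
      = (\<Sum>k\<in>{0..<r}. (if k = i then - \<gamma> k else if i = k + 1 then 1 else 0) * P $$ (k, j))"
    using assms A_gamma_carrier[of r \<gamma>] by (simp add: scalar_prod_def A_gamma_index)
  then show ?thesis
    using sum_bidiagonal_column[OF assms(2), of "\<lambda>k. - \<gamma> k" "\<lambda>k. P $$ (k, j)"] by simp
qed

lemma mult_A_gamma_index:
  assumes "P \<in> carrier_mat r r" "i < r" "j < r"
  shows "(P * A_gamma r \<gamma>) $$ (i, j)
       = - \<gamma> j * P $$ (i, j) + (if 0 < j then P $$ (i, j - 1) else 0)"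
proof -
  have "(P * A_gamma r \<gamma>) $$ (i, j)
      = (\<Sum>k\<in>{0..<r}. (if k = j then - \<gamma> k else if j = k + 1 then 1 else 0) * P $$ (i, k))"
    using assms A_gamma_carrier[of r \<gamma>]
    by (auto simp add: scalar_prod_def A_gamma_index mult.commute intro!: sum.cong)
  then show ?thesis
    using sum_bidiagonal_column[OF assms(3), of "\<lambda>k. - \<gamma> k" "\<lambda>k. P $$ (i, k)"] by simp
qed

lemma lyapunov_A_gamma_index:
  assumes P: "P \<in> carrier_mat r r"
    and lyap: "transpose_mat (A_gamma r \<gamma>) * P + P * A_gamma r \<gamma> = - (1\<^sub>m r)"
    and ij: "i < r" "j < r"
  shows "(\<gamma> i + \<gamma> j) * P $$ (i, j) = (if i = j then 1 else 0)
      + (if 0 < i then P $$ (i - 1, j) else 0) + (if 0 < j then P $$ (i, j - 1) else 0)"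
proof -
  have "(transpose_mat (A_gamma r \<gamma>) * P + P * A_gamma r \<gamma>) $$ (i, j)
      = (transpose_mat (A_gamma r \<gamma>) * P) $$ (i, j) + (P * A_gamma r \<gamma>) $$ (i, j)"
    using P ij A_gamma_carrier[of r \<gamma>] by simp
  moreover have "(- (1\<^sub>m r)) $$ (i, j) = - (if i = j then 1 else (0::real))"
    using ij by simp
  ultimately have "(transpose_mat (A_gamma r \<gamma>) * P) $$ (i, j) + (P * A_gamma r \<gamma>) $$ (i, j)
      = - (if i = j then 1 else 0)"
    using lyap by metis
  then show ?thesis
    using transpose_A_gamma_mult_index[OF P ij] mult_A_gamma_index[OF P ij]
    by (simp add: algebra_simps)
qed

lemma lyapunov_recurrence_bound:
  fixes p :: "nat \<Rightarrow> nat \<Rightarrow> real" and \<gamma> :: "nat \<Rightarrow> real" and g :: real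
  assumes g: "1 \<le> g" and \<gamma>_ge: "\<And>i. i < r \<Longrightarrow> g \<le> \<gamma> i"
    and rec: "\<And>i j. i < r \<Longrightarrow> j < r \<Longrightarrow> (\<gamma> i + \<gamma> j) * p i j = (if i = j then 1 else 0)
      + (if 0 < i then p (i - 1) j else 0) + (if 0 < j then p i (j - 1) else 0)"
    and ij: "i < r" "j < r"
  shows "\<bar>p i j\<bar> \<le> 3 ^ (i + j) / g"
  using ij
proof (induction "i + j" arbitrary: i j rule: less_induct)
  case less
  define n where "n = i + j"
  define left where "left = (if 0 < i then p (i - 1) j else 0)"
  define below where "below = (if 0 < j then p i (j - 1) else 0)"
  have g0: "0 < g" using g by simp
  have left_bound: "\<bar>left\<bar> \<le> 3 ^ n / (3 * g)"
  proof (cases "0 < i")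
    case True
    then have "\<bar>p (i - 1) j\<bar> \<le> 3 ^ (i - 1 + j) / g"
      using less(1)[of "i - 1" j] less.prems by auto
    moreover have "(3::real) ^ n = 3 * 3 ^ (i - 1 + j)"
      using True unfolding n_def by (metis Suc_diff_1 add_Suc power_Suc)
    ultimately show ?thesis using True g0 unfolding left_def by (simp add: field_simps)
  qed (use g0 in \<open>simp add: left_def\<close>)
  have below_bound: "\<bar>below\<bar> \<le> 3 ^ n / (3 * g)"
  proof (cases "0 < j")
    case True
    then have "\<bar>p i (j - 1)\<bar> \<le> 3 ^ (i + (j - 1)) / g"
      using less(1)[of i "j - 1"] less.prems by auto
    moreover have "(3::real) ^ n = 3 * 3 ^ (i + (j - 1))"
      using True unfolding n_def by (metis Suc_diff_1 add_Suc_right power_Suc)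
    ultimately show ?thesis using True g0 unfolding below_def by (simp add: field_simps)
  qed (use g0 in \<open>simp add: below_def\<close>)
  have "3 ^ n / (3 * g) \<le> (3::real) ^ n / 3"
    using g by (intro divide_left_mono) auto
  moreover have "(1::real) \<le> 3 ^ n" by simp
  ultimately have "1 + \<bar>left\<bar> + \<bar>below\<bar> \<le> 2 * 3 ^ n"
    using left_bound below_bound by linarith
  moreover have "2 * g * \<bar>p i j\<bar> \<le> 1 + \<bar>left\<bar> + \<bar>below\<bar>"
  proof -
    have "2 * g * \<bar>p i j\<bar> \<le> (\<gamma> i + \<gamma> j) * \<bar>p i j\<bar>"
      using \<gamma>_ge[OF less.prems(1)] \<gamma>_ge[OF less.prems(2)] by (intro mult_right_mono) auto
    also have "\<dots> = \<bar>(\<gamma> i + \<gamma> j) * p i j\<bar>"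
      using \<gamma>_ge[OF less.prems(1)] \<gamma>_ge[OF less.prems(2)] g0 by (simp add: abs_mult)
    also have "\<dots> = \<bar>(if i = j then 1 else 0) + left + below\<bar>"
      by (simp only: left_def below_def rec[OF less.prems])
    also have "\<dots> \<le> 1 + \<bar>left\<bar> + \<bar>below\<bar>" by (simp; arith)
    finally show ?thesis .
  qed
  ultimately show ?case using g0 unfolding n_def by (simp add: field_simps)
qed

lemma abs_Gamma_vec_index_le:
  assumes g: "1 \<le> g" and \<gamma>_ge: "\<And>i. i < r \<Longrightarrow> g \<le> \<gamma> i" and j: "j < r"
  shows "\<bar>Gamma_vec r \<gamma> $ j\<bar> \<le> 1 / g"
proof -
  have "g ^ 1 \<le> g ^ (r - j)" using g j by (intro power_increasing) auto
  also have "\<dots> = (\<Prod>k\<in>{j..<r}. g)" by simp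
  also have "\<dots> \<le> (\<Prod>k\<in>{j..<r}. \<gamma> k)" using g \<gamma>_ge by (intro prod_mono) auto
  finally have "g \<le> (\<Prod>k\<in>{j..<r}. \<gamma> k)" by simp
  moreover have "Gamma_vec r \<gamma> $ j = 1 / (\<Prod>k\<in>{j..<r}. \<gamma> k)"
    unfolding Gamma_vec_def using j by simp
  ultimately show ?thesis
    using g by (auto intro!: divide_left_mono)
qed

lemma abs_mult_mat_vec_index_le:
  fixes A :: "real mat"
  assumes A: "A \<in> carrier_mat m n" and v: "v \<in> carrier_vec n" and i: "i < m"
    and A_le: "\<And>j. j < n \<Longrightarrow> \<bar>A $$ (i, j)\<bar> \<le> a"
    and v_le: "\<And>j. j < n \<Longrightarrow> \<bar>v $ j\<bar> \<le> b"
  shows "\<bar>(A *\<^sub>v v) $ i\<bar> \<le> n * (a * b)"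
proof -
  have "(A *\<^sub>v v) $ i = (\<Sum>j\<in>{0..<n}. A $$ (i, j) * v $ j)"
    using A v i by (simp add: scalar_prod_def)
  also have "\<bar>\<dots>\<bar> \<le> (\<Sum>j\<in>{0..<n}. \<bar>A $$ (i, j)\<bar> * \<bar>v $ j\<bar>)"
    unfolding abs_mult[symmetric] by (rule sum_abs)
  also have "\<dots> \<le> (\<Sum>j\<in>{0..<n}. a * b)"
  proof (rule sum_mono)
    fix j assume "j \<in> {0..<n}"
    then show "\<bar>A $$ (i, j)\<bar> * \<bar>v $ j\<bar> \<le> a * b"
      using A_le v_le by (intro mult_mono) (auto intro: order_trans[OF abs_ge_zero])
  qed
  finally show ?thesis by simp
qed

lemma vnorm2_le_sqrt_dim:
  assumes "\<And>i. i < dim_vec v \<Longrightarrow> \<bar>v $ i\<bar> \<le> c" and "0 \<le> c"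
  shows "vnorm2 v \<le> sqrt (dim_vec v) * c"
proof -
  have "(\<Sum>i<dim_vec v. (v $ i)\<^sup>2) \<le> (\<Sum>i<dim_vec v. c\<^sup>2)"
  proof (rule sum_mono)
    fix i assume "i \<in> {..<dim_vec v}"
    then have "\<bar>v $ i\<bar> \<le> c" using assms(1) by simp
    then show "(v $ i)\<^sup>2 \<le> c\<^sup>2"
      by (metis abs_ge_zero power2_abs power_mono)
  qed
  then have "vnorm2 v \<le> sqrt (dim_vec v * c\<^sup>2)"
    unfolding vnorm2_def by simp
  also have "\<dots> = sqrt (dim_vec v) * c"
    using assms(2) by (simp add: real_sqrt_mult)
  finally show ?thesis .
qed

theorem lemma4:
  fixes r :: nat
  assumes "r > 0"
  shows "\<exists>C'::real. \<forall>(\<gamma>::nat \<Rightarrow> real) (P::real mat).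
           (\<forall>i<r. \<gamma> i > 0) \<and>
           (\<forall>i<r. \<gamma> (r - 1) \<le> \<gamma> i) \<and>
           Min (\<gamma> ` {..<r}) \<ge> sqrt 2 \<and>
           P \<in> carrier_mat r r \<and>
           transpose_mat (A_gamma r \<gamma>) * P + P * A_gamma r \<gamma> = - (1\<^sub>m r)
           \<longrightarrow> vnorm2 (P *\<^sub>v Gamma_vec r \<gamma>) \<le> C' / (Min (\<gamma> ` {..<r}))^2"
proof (intro exI allI impI, elim conjE)
  fix \<gamma> :: "nat \<Rightarrow> real" and P :: "real mat"
  assume min_ge: "Min (\<gamma> ` {..<r}) \<ge> sqrt 2" and P: "P \<in> carrier_mat r r"
    and lyap: "transpose_mat (A_gamma r \<gamma>) * P + P * A_gamma r \<gamma> = - (1\<^sub>m r)"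
  define g where "g = Min (\<gamma> ` {..<r})"
  have g: "1 \<le> g" using min_ge real_sqrt_ge_one[of 2] unfolding g_def by linarith
  have \<gamma>_ge: "\<And>i. i < r \<Longrightarrow> g \<le> \<gamma> i" unfolding g_def by (rule Min_le) auto
  have P_bound: "\<bar>P $$ (i, j)\<bar> \<le> 9 ^ r / g" if "i < r" "j < r" for i j
  proof -
    have "\<bar>P $$ (i, j)\<bar> \<le> 3 ^ (i + j) / g"
      using lyapunov_recurrence_bound[where r = r, OF g \<gamma>_ge lyapunov_A_gamma_index[OF P lyap] that] .
    also have "\<dots> \<le> 3 ^ (2 * r) / g"
      using that g by (intro divide_right_mono power_increasing) auto
    finally show ?thesis by (simp add: power_mult)
  qed
  have "\<bar>(P *\<^sub>v Gamma_vec r \<gamma>) $ i\<bar> \<le> r * 9 ^ r / g\<^sup>2" if "i < r" for i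
    using abs_mult_mat_vec_index_le[OF P _ that P_bound[OF that]
        abs_Gamma_vec_index_le[where r = r and \<gamma> = \<gamma>, OF g \<gamma>_ge]]
    by (simp add: Gamma_vec_def power2_eq_square)
  moreover have "dim_vec (P *\<^sub>v Gamma_vec r \<gamma>) = r" using P by simp
  ultimately have "vnorm2 (P *\<^sub>v Gamma_vec r \<gamma>) \<le> sqrt r * (r * 9 ^ r / g\<^sup>2)"
    using vnorm2_le_sqrt_dim[of "P *\<^sub>v Gamma_vec r \<gamma>" "r * 9 ^ r / g\<^sup>2"] by simp
  then show "vnorm2 (P *\<^sub>v Gamma_vec r \<gamma>) \<le> sqrt r * r * 9 ^ r / (Min (\<gamma> ` {..<r}))\<^sup>2"
    unfolding g_def by simp
qed

end
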